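(* Let $n$ be an even positive integer and $a$ a parameter. Let $L_n(a)$ be the $n\times n$ tridiagonal matrix with $(L_n(a))_{i,i}=ia$ for $1\le i\le n$, $(L_n(a))_{i,i+1}=n-i$ for $1\le i\le n-1$, $(L_n(a))_{i,i-1}=i-1$ for $2\le i\le n$, and all other entries $0$. Then the characteristic polynomial $\det(zI_n-L_n(a))$ of $L_n(a)$ equals $$\Lambda_n(a;z):=\prod_{\substack{1\le i<j\le n\\ i+j=n+1}}\left[(z-ia)(z-ja)-(i-j)^2\right].$$ *)

theory Defs
  imports "Jordan_Normal_Form.Determinant" "Jordan_Normal_Form.Char_Poly"
begin

text \<open>The n x n tridiagonal matrix L_n(a), with 0-based indices (row i, column j
  correspond to the paper's row i+1, column j+1).\<close>
definition L_mat :: "nat \<Rightarrow> 'a::comm_ring_1 \<Rightarrow> 'a mat" where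
  "L_mat n a = mat n n (\<lambda>(i,j).
     if j = i then of_nat (i+1) * a
     else if j = i + 1 then of_nat (n - (i+1))
     else if i = j + 1 then of_nat i
     else 0)"

definition Lambda_poly :: "nat \<Rightarrow> 'a::comm_ring_1 \<Rightarrow> 'a poly" where
  "Lambda_poly n a = (\<Prod>(i,j)\<in>{(i,j). 1 \<le> i \<and> i < j \<and> j \<le> n \<and> i + j = n + 1}.
      [:- (of_nat i * a), 1:] * [:- (of_nat j * a), 1:] - [:(of_int (int i - int j))^2:])"

end

theory Submission
  imports Defs
begin

(* Let E be the unit lower triangular matrix that subtracts a times row i - 1 and row i - 2
   from each row i >= 3. Then E L_{n+2}(a) E^{-1} is block upper triangular, with diagonal blocks
   [[a, n + 1], [n + 1, (n + 2) a]] and L_n(a) + a I; hence the characteristic polynomial of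
   L_{n+2}(a) at z is ((z - a)(z - (n + 2) a) - (n + 1)^2) times that of L_n(a) at z - a.
   The product Lambda_{n+2} obeys the same recursion: the pair (1, n + 2) contributes the
   quadratic factor, and the other pairs are those of Lambda_n shifted by one, which replaces
   z by z - a. *)

text \<open>The library proves this only over integral domains; Laplace expansion along the first
  column works in any commutative ring.\<close>

lemma det_four_block_mat_lower_left_zero_comm_ring:
  fixes A1 :: "'a::comm_ring_1 mat"
  assumes "A1 \<in> carrier_mat n n" and "A2 \<in> carrier_mat n m" and A4: "A4 \<in> carrier_mat m m"
  shows "det (four_block_mat A1 A2 (0\<^sub>m m n) A4) = det A1 * det A4"
  using assms(1,2)
proof (induction n arbitrary: A1 A2)
  case 0
  then have "four_block_mat A1 A2 (0\<^sub>m m 0) A4 = A4"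
    using A4 by (intro eq_matI) auto
  then show ?case using 0 by simp
next
  case (Suc n)
  let ?M = "four_block_mat A1 A2 (0\<^sub>m m (Suc n)) A4"
  define A2' where "A2' i = mat n m (\<lambda>(r,c). A2 $$ (if r < i then r else Suc r, c))" for i
  have M: "?M \<in> carrier_mat (Suc n + m) (Suc n + m)"
    using Suc.prems A4 by auto
  have delete: "mat_delete ?M i 0 = four_block_mat (mat_delete A1 i 0) (A2' i) (0\<^sub>m m n) A4"
    if "i < Suc n" for i
    using Suc.prems A4 that by (intro eq_matI) (auto simp: mat_delete_def A2'_def)
  have "det ?M = (\<Sum>i<Suc n + m. ?M $$ (i,0) * cofactor ?M i 0)"
    by (rule laplace_expansion_column[OF M]) simp
  also have "\<dots> = (\<Sum>i<Suc n. A1 $$ (i,0) * cofactor ?M i 0)"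
    using Suc.prems A4 by (intro sum.mono_neutral_cong_right) auto
  also have "\<dots> = (\<Sum>i<Suc n. A1 $$ (i,0) * cofactor A1 i 0) * det A4"
    unfolding sum_distrib_right
  proof (intro sum.cong refl)
    fix i assume "i \<in> {..<Suc n}"
    moreover have "mat_delete A1 i 0 \<in> carrier_mat n n"
      using mat_delete_carrier[OF Suc.prems(1)] by simp
    moreover have "A2' i \<in> carrier_mat n m"
      by (simp add: A2'_def)
    ultimately have "det (mat_delete ?M i 0) = det (mat_delete A1 i 0) * det A4"
      by (simp add: delete Suc.IH)
    then show "A1 $$ (i,0) * cofactor ?M i 0 = A1 $$ (i,0) * cofactor A1 i 0 * det A4"
      by (simp add: cofactor_def)
  qed
  also have "\<dots> = det A1 * det A4"
    unfolding laplace_expansion_column[OF Suc.prems(1) zero_less_Suc] ..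
  finally show ?case .
qed

lemma char_poly_four_block_mat_lower_left_zero:
  fixes A1 :: "'a::comm_ring_1 mat"
  assumes "A1 \<in> carrier_mat n n" and "A2 \<in> carrier_mat n m" and "A4 \<in> carrier_mat m m"
  shows "char_poly (four_block_mat A1 A2 (0\<^sub>m m n) A4) = char_poly A1 * char_poly A4"
proof -
  have "char_poly_matrix (four_block_mat A1 A2 (0\<^sub>m m n) A4) =
      four_block_mat (char_poly_matrix A1) (map_mat (\<lambda>x. [:- x:]) A2) (0\<^sub>m m n) (char_poly_matrix A4)"
    using assms by (intro eq_matI) (auto simp: char_poly_matrix_def)
  then show ?thesis
    unfolding char_poly_def using assms
    by (simp add: det_four_block_mat_lower_left_zero_comm_ring[of _ n _ m])
qed

lemma det_2x2:
  fixes A :: "'a::comm_ring_1 mat"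
  assumes A: "A \<in> carrier_mat 2 2"
  shows "det A = A $$ (0,0) * A $$ (1,1) - A $$ (0,1) * A $$ (1,0)"
proof -
  have "det A = (\<Sum>i<2. A $$ (i,0) * cofactor A i 0)"
    by (rule laplace_expansion_column[OF A]) simp
  also have "\<dots> = A $$ (0,0) * A $$ (1,1) - A $$ (1,0) * A $$ (0,1)"
    using A by (simp add: numeral_2_eq_2 cofactor_def det_single mat_delete_def)
  finally show ?thesis by (simp add: mult.commute)
qed

lemma char_poly_2x2:
  fixes A :: "'a::comm_ring_1 mat"
  assumes A: "A \<in> carrier_mat 2 2"
  shows "char_poly A = [:- A $$ (0,0), 1:] * [:- A $$ (1,1), 1:] - [:A $$ (0,1) * A $$ (1,0):]"
  using A by (simp add: char_poly_defs det_2x2 numeral_2_eq_2 mult_to_poly one_pCons)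

lemma char_poly_add_smult_one:
  fixes A :: "'a::comm_ring_1 mat"
  assumes A: "A \<in> carrier_mat n n"
  shows "char_poly (A + c \<cdot>\<^sub>m 1\<^sub>m n) = char_poly A \<circ>\<^sub>p [:-c, 1:]"
proof -
  have compose: "comm_ring_hom (\<lambda>p::'a poly. p \<circ>\<^sub>p [:-c, 1:])"
    by unfold_locales (auto simp: pcompose_add pcompose_mult)
  have "char_poly_matrix (A + c \<cdot>\<^sub>m 1\<^sub>m n) = map_mat (\<lambda>p. p \<circ>\<^sub>p [:-c, 1:]) (char_poly_matrix A)"
    using A by (intro eq_matI) (auto simp: char_poly_matrix_def pcompose_pCons)
  then show ?thesis
    by (simp add: char_poly_def comm_ring_hom.hom_det[OF compose])
qed

lemma char_poly_eq_if_intertwined: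
  fixes A B R :: "'a::comm_ring_1 mat"
  assumes carrier: "A \<in> carrier_mat n n" "B \<in> carrier_mat n n" "R \<in> carrier_mat n n"
    and unit: "det R dvd 1" and intertwine: "R * A = B * R"
  shows "char_poly A = char_poly B"
proof -
  from unit obtain u where u: "det R * u = 1" by (auto elim: dvdE)
  define Q where "Q = u \<cdot>\<^sub>m adj_mat R"
  have Q: "Q \<in> carrier_mat n n" using adj_mat(1)[OF carrier(3)] by (simp add: Q_def)
  have u_det: "u \<cdot>\<^sub>m (det R \<cdot>\<^sub>m 1\<^sub>m n) = 1\<^sub>m n"
    using u by (intro eq_matI) (auto simp: mult.commute)
  have QR: "Q * R = 1\<^sub>m n"
    unfolding Q_def mult_smult_assoc_mat[OF adj_mat(1)[OF carrier(3)] carrier(3)] adj_mat(3)[OF carrier(3)]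
    by (rule u_det)
  have RQ: "R * Q = 1\<^sub>m n"
    unfolding Q_def mult_smult_distrib[OF carrier(3) adj_mat(1)[OF carrier(3)]] adj_mat(2)[OF carrier(3)]
    by (rule u_det)
  have "A = Q * R * A"
    using carrier(1) by (simp add: QR)
  also have "\<dots> = Q * B * R"
    unfolding assoc_mult_mat[OF Q carrier(3) carrier(1)] intertwine
    using assoc_mult_mat[OF Q carrier(2) carrier(3)] by simp
  finally have "A = Q * B * R" .
  then have "similar_mat A B"
    using carrier Q QR RQ by (intro similar_matI[of A B Q R n]) auto
  then show ?thesis by (rule char_poly_similar)
qed

lemma sum_lessThan_if_eq_mult:
  fixes f :: "nat \<Rightarrow> 'a::semiring_0"
  shows "(\<Sum>k<n. (if k = p then c else 0) * f k) = (if p < n then c * f p else 0)"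
    and "(\<Sum>k<n. f k * (if k = p then c else 0)) = (if p < n then f p * c else 0)"
  by (simp_all add: if_distrib[of "\<lambda>x. x * _"] if_distrib[of "\<lambda>x. _ * x"] cong: if_cong)

lemma L_mat_dim [simp]:
  "dim_row (L_mat n a) = n" "dim_col (L_mat n a) = n" "L_mat n a \<in> carrier_mat n n"
  by (simp_all add: L_mat_def)

lemma L_mat_index:
  assumes "i < n" "k < n"
  shows "L_mat n a $$ (i,k) =
    (if k = i then of_nat (i+1) * a else if k = i + 1 then of_nat (n - (i+1)) else if i = k + 1 then of_nat i else 0)"
  using assms by (simp add: L_mat_def)

definition L_elim_mat :: "nat \<Rightarrow> 'a::comm_ring_1 \<Rightarrow> 'a mat" where
  "L_elim_mat n a = mat n n (\<lambda>(i,k).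
     if k = i then 1
     else if 2 \<le> i \<and> k + 1 = i then - a
     else if 2 \<le> i \<and> k + 2 = i then - 1
     else 0)"

lemma L_elim_mat_dim [simp]:
  "dim_row (L_elim_mat n a) = n" "dim_col (L_elim_mat n a) = n" "L_elim_mat n a \<in> carrier_mat n n"
  by (simp_all add: L_elim_mat_def)

lemma det_L_elim_mat: "det (L_elim_mat n a) = 1"
proof -
  have "det (L_elim_mat n a) = prod_list (diag_mat (L_elim_mat n a))"
    by (rule det_lower_triangular[of n]) (auto simp: L_elim_mat_def)
  also have "diag_mat (L_elim_mat n a) = replicate n 1"
    by (intro nth_equalityI) (auto simp: diag_mat_def L_elim_mat_def)
  finally show ?thesis by simp
qed

lemma L_elim_mat_index_by_row:
  assumes "i < n" "k < n"
  shows "L_elim_mat n a $$ (i,k) =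
    (if k = i then 1 else 0) - (if k = i - 1 then (if 2 \<le> i then a else 0) else 0)
      - (if k = i - 2 then (if 2 \<le> i then 1 else 0) else 0)"
  using assms by (auto simp: L_elim_mat_def)

lemma L_elim_mat_index_by_col:
  assumes "k < n" "j < n"
  shows "L_elim_mat n a $$ (k,j) =
    (if k = j then 1 else 0) - (if k = j + 1 then (if 1 \<le> j then a else 0) else 0)
      - (if k = j + 2 then 1 else 0)"
  using assms by (auto simp: L_elim_mat_def)

lemma L_elim_mat_mult_index:
  fixes M :: "'a::comm_ring_1 mat"
  assumes "M \<in> carrier_mat n n" and "i < n" "j < n"
  shows "(L_elim_mat n a * M) $$ (i,j) =
    M $$ (i,j) - (if 2 \<le> i then a * M $$ (i - 1, j) + M $$ (i - 2, j) else 0)"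
proof -
  have "(L_elim_mat n a * M) $$ (i,j) = (\<Sum>k<n. L_elim_mat n a $$ (i,k) * M $$ (k,j))"
    using assms by (auto simp: index_mult_mat scalar_prod_def lessThan_atLeast0 carrier_matD intro!: sum.cong)
  also have "\<dots> = M $$ (i,j) - (if 2 \<le> i then a * M $$ (i - 1, j) + M $$ (i - 2, j) else 0)"
    using assms by (auto simp: L_elim_mat_index_by_row left_diff_distrib sum_subtractf sum_lessThan_if_eq_mult cong: sum.cong_simp)
  finally show ?thesis .
qed

lemma mult_L_elim_mat_index:
  fixes M :: "'a::comm_ring_1 mat"
  assumes "M \<in> carrier_mat n n" and "i < n" "j < n"
  shows "(M * L_elim_mat n a) $$ (i,j) =
    M $$ (i,j) - (if 1 \<le> j \<and> j + 1 < n then a * M $$ (i, j + 1) else 0)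
      - (if j + 2 < n then M $$ (i, j + 2) else 0)"
proof -
  have "(M * L_elim_mat n a) $$ (i,j) = (\<Sum>k<n. M $$ (i,k) * L_elim_mat n a $$ (k,j))"
    using assms by (auto simp: index_mult_mat scalar_prod_def lessThan_atLeast0 carrier_matD intro!: sum.cong)
  also have "\<dots> = M $$ (i,j) - (if 1 \<le> j \<and> j + 1 < n then a * M $$ (i, j + 1) else 0)
      - (if j + 2 < n then M $$ (i, j + 2) else 0)"
    using assms by (auto simp: L_elim_mat_index_by_col right_diff_distrib sum_subtractf sum_lessThan_if_eq_mult cong: sum.cong_simp)
  finally show ?thesis .
qed

definition L_reduced_mat :: "nat \<Rightarrow> 'a::comm_ring_1 \<Rightarrow> 'a mat" where
  "L_reduced_mat N a = four_block_mat
     (mat 2 2 (\<lambda>(i,j). if i \<noteq> j then of_nat (N+1) else if i = 0 then a else of_nat (N+2) * a))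
     (mat 2 N (\<lambda>(i,j). if i = 1 \<and> j = 0 then of_nat N else 0))
     (0\<^sub>m N 2)
     (L_mat N a + a \<cdot>\<^sub>m 1\<^sub>m N)"

lemma L_reduced_mat_carrier:
  "L_reduced_mat N a \<in> carrier_mat (N+2) (N+2)"
proof -
  have "L_reduced_mat N a \<in> carrier_mat (2+N) (2+N)"
    unfolding L_reduced_mat_def by (rule four_block_carrier_mat) auto
  then show ?thesis by (simp add: add.commute)
qed

lemma L_reduced_mat_index:
  assumes "i < N+2" "k < N+2"
  shows "L_reduced_mat N a $$ (i,k) =
    (if i < 2 \<and> k < 2 then (if i \<noteq> k then of_nat (N+1) else if i = 0 then a else of_nat (N+2) * a)
     else if i < 2 then (if i = 1 \<and> k = 2 then of_nat N else 0)
     else if k < 2 then 0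
     else L_mat N a $$ (i-2, k-2) + (if i = k then a else 0))"
  using assms unfolding L_reduced_mat_def
  by (subst index_mat_four_block) auto

lemma L_elim_mat_intertwines_L_mat_index:
  fixes a :: "'a::comm_ring_1"
  assumes i: "i < N+2" and j: "j < N+2"
  shows "L_mat (N+2) a $$ (i,j) - (if 2 \<le> i then a * L_mat (N+2) a $$ (i-1,j) + L_mat (N+2) a $$ (i-2,j) else 0)
    = L_reduced_mat N a $$ (i,j) - (if 1 \<le> j \<and> j+1 < N+2 then a * L_reduced_mat N a $$ (i,j+1) else 0)
        - (if j+2 < N+2 then L_reduced_mat N a $$ (i,j+2) else 0)"
proof -
  consider "i = 0" | "i = 1" | q where "i = q + 2" "q < N"
    using i by (cases i; cases "i - 1") auto
  then show ?thesis
  proof cases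
    case 1
    then show ?thesis using j by (auto simp: L_reduced_mat_index L_mat_index)
  next
    case 2
    with j show ?thesis
      by (cases "N = 0") (auto simp: L_reduced_mat_index L_mat_index of_nat_diff algebra_simps)
  next
    case 3
    consider "j = 0" | "j = 1" | p where "j = p + 2" "p < N"
      using j by (cases j; cases "j - 1") auto
    then show ?thesis
    proof cases
      case 1
      with 3 show ?thesis by (auto simp: L_reduced_mat_index L_mat_index)
    next
      case 2
      with 3 show ?thesis by (cases "N = 1") (auto simp: L_reduced_mat_index L_mat_index)
    next
      case (3 p)
      have "p = q + 1 \<or> p = q \<or> p + 1 = q \<or> p + 2 = q \<or> p + 3 = q \<or> q + 1 < p \<or> p + 3 < q"
        by linarith
      with 3 \<open>i = q + 2\<close> \<open>q < N\<close> show ?thesis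
        by (elim disjE; cases "N = p + 1"; cases "N = p + 2")
          (auto simp: L_reduced_mat_index L_mat_index of_nat_diff algebra_simps)
    qed
  qed
qed

lemma L_elim_mat_intertwines_L_mat:
  fixes a :: "'a::comm_ring_1"
  shows "L_elim_mat (N+2) a * L_mat (N+2) a = L_reduced_mat N a * L_elim_mat (N+2) a"
proof (rule eq_matI)
  fix i j assume "i < dim_row (L_reduced_mat N a * L_elim_mat (N+2) a)"
    and "j < dim_col (L_reduced_mat N a * L_elim_mat (N+2) a)"
  then have i: "i < N+2" and j: "j < N+2"
    using L_reduced_mat_carrier[of N a] by auto
  show "(L_elim_mat (N+2) a * L_mat (N+2) a) $$ (i,j) = (L_reduced_mat N a * L_elim_mat (N+2) a) $$ (i,j)"
    unfolding L_elim_mat_mult_index[OF L_mat_dim(3) i j] mult_L_elim_mat_index[OF L_reduced_mat_carrier i j]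
    by (rule L_elim_mat_intertwines_L_mat_index[OF i j])
qed (use L_reduced_mat_carrier[of N a] in auto)

lemma char_poly_L_reduced_mat:
  fixes a :: "'a::comm_ring_1"
  shows "char_poly (L_reduced_mat N a) =
    ([:-a, 1:] * [:-(of_nat (N+2) * a), 1:] - [:of_nat (N+1) ^ 2:]) * (char_poly (L_mat N a) \<circ>\<^sub>p [:-a, 1:])"
  unfolding L_reduced_mat_def
  by (simp add: char_poly_four_block_mat_lower_left_zero[of _ 2 _ N] char_poly_2x2 char_poly_add_smult_one power2_eq_square)

lemma char_poly_L_mat_Suc_Suc:
  fixes a :: "'a::comm_ring_1"
  shows "char_poly (L_mat (N+2) a) =
    ([:-a, 1:] * [:-(of_nat (N+2) * a), 1:] - [:of_nat (N+1) ^ 2:]) * (char_poly (L_mat N a) \<circ>\<^sub>p [:-a, 1:])"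
proof -
  have "char_poly (L_mat (N+2) a) = char_poly (L_reduced_mat N a)"
    by (rule char_poly_eq_if_intertwined[OF L_mat_dim(3) L_reduced_mat_carrier L_elim_mat_dim(3)
          _ L_elim_mat_intertwines_L_mat])
      (simp add: det_L_elim_mat)
  then show ?thesis
    by (simp add: char_poly_L_reduced_mat)
qed

lemma Lambda_poly_Suc_Suc:
  fixes a :: "'a::comm_ring_1"
  shows "Lambda_poly (N+2) a =
    ([:-a, 1:] * [:-(of_nat (N+2) * a), 1:] - [:of_nat (N+1) ^ 2:]) * (Lambda_poly N a \<circ>\<^sub>p [:-a, 1:])"
proof -
  define S where "S n = {(i,j). 1 \<le> i \<and> i < j \<and> j \<le> n \<and> i + j = n + 1}" for n :: nat
  define f where "f = (\<lambda>(i::nat, j::nat).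
    [:- (of_nat i * a), 1:] * [:- (of_nat j * a), 1:] - [:(of_int (int i - int j))^2:])"
  let ?shift = "\<lambda>(i::nat, j::nat). (Suc i, Suc j)"
  have Lambda: "Lambda_poly n a = prod f (S n)" for n
    unfolding Lambda_poly_def S_def f_def ..
  have S_Suc_Suc: "S (N+2) = insert (1, N+2) (?shift ` S N)"
  proof (intro equalityI subsetI)
    fix x assume "x \<in> S (N+2)"
    then obtain i j where x: "x = (i,j)" and ij: "1 \<le> i" "i < j" "j \<le> N+2" "i + j = N+3"
      by (auto simp: S_def)
    show "x \<in> insert (1, N+2) (?shift ` S N)"
    proof (cases "i = 1")
      case False
      then have "(i-1, j-1) \<in> S N" and "x = ?shift (i-1, j-1)"
        using ij x by (auto simp: S_def)
      then show ?thesis by blast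
    qed (use ij x in auto)
  qed (auto simp: S_def)
  have "finite (S N)"
    by (rule finite_subset[of _ "{..N} \<times> {..N}"]) (auto simp: S_def)
  moreover have "(1, N+2) \<notin> ?shift ` S N" and "inj_on ?shift (S N)"
    by (auto simp: S_def inj_on_def)
  moreover have "f (?shift x) = f x \<circ>\<^sub>p [:-a, 1:]" for x
    by (cases x) (simp add: f_def pcompose_pCons algebra_simps)
  moreover have "f (1, N+2) = [:-a, 1:] * [:-(of_nat (N+2) * a), 1:] - [:of_nat (N+1) ^ 2:]"
    by (simp add: f_def power2_eq_square algebra_simps)
  ultimately show ?thesis
    unfolding Lambda S_Suc_Suc by (simp add: prod.reindex pcompose_prod)
qed

lemma char_poly_L_mat_even:
  fixes a :: "'a::comm_ring_1"
  shows "char_poly (L_mat (2*k) a) = Lambda_poly (2*k) a"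
proof (induction k)
  case 0
  have "char_poly (L_mat 0 a) = 1"
    by (simp add: char_poly_def)
  moreover have "Lambda_poly 0 a = 1"
    unfolding Lambda_poly_def by (rule prod.neutral) auto
  ultimately show ?case by simp
next
  case (Suc k)
  then show ?case
    using char_poly_L_mat_Suc_Suc[of "2*k" a] Lambda_poly_Suc_Suc[of "2*k" a] by simp
qed

theorem lemmaA3:
  fixes a :: "'a::comm_ring_1" and n :: nat
  assumes "even n" and "n > 0"
  shows "char_poly (L_mat n a) = Lambda_poly n a"
  using assms(1) char_poly_L_mat_even by (auto elim: evenE)

end
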